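(* Let $F$ be a field containing a primitive cube root of unity $q$. Let $L=F[x]/(x^3)$, graded by $\mathbb Z_3$ with $\deg x^k=k\bmod 3$, in the category of $\mathbb Z_3$-graded vector spaces with braiding $C(a\otimes b)=r(|b|,|a|)\,b\otimes a$, where $r(k,m)=q^{km}$, and with bracket $[a,b]=ab-r(|b|,|a|)\,ba$ for homogeneous $a,b$. Then $(L,[\ \,])$ is a braided m-Lie algebra and a (left) Jacobi braided Lie algebra, but it is not a strict Jacobi braided Lie algebra (the braided anti-symmetry $[\ \,]=-[\ \,]C_{L,L}$ fails), and there is no coalgebra structure $(\Delta,\varepsilon)$ on $L$ in this category making $(L,\Delta,\varepsilon,[\ \,])$ a (left) braided Lie algebra in the sense of Majid.
   Context: Braided m-Lie algebra: an object $L$ with morphism $[\ \,]:L\otimes L\to L$ such that there are an algebra $(A,m)$ in the category and a monomorphism $\phi:L\to A$ with $\phi[\ \,]=m(\phi\otimes\phi)-m(\phi\otimes\phi)C_{L,L}$. (BJI): with $C=C_{L,L}$, $[\ \,](L\otimes[\ \,]) + [\ \,](L\otimes[\ \,])(L\otimes C^{-1})(C\otimes L) + [\ \,](L\otimes[\ \,])(C^{-1}\otimes L)(L\otimes C) = 0$. A (left) Jacobi braided Lie algebra satisfies (BJI); a (left) strict Jacobi braided Lie algebra satisfies both (BJI) and (BAS): $[\ \,]=-[\ \,]C_{L,L}$. Majid's (left) braided Lie algebra: a coalgebra $(L,\Delta,\varepsilon)$ in the category (degree-preserving, coassociative, counital, with $F$ in degree $0$) with a morphism $[\ \,]$ such that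 (L1) $[\ \,](L\otimes[\ \,]) = [\ \,]([\ \,]\otimes[\ \,])(L\otimes C\otimes L)(\Delta\otimes L\otimes L)$; (L2) $C([\ \,]\otimes L)(L\otimes C)(\Delta\otimes L) = (L\otimes[\ \,])(\Delta\otimes L)$; (L3) $\Delta[\ \,] = ([\ \,]\otimes[\ \,])(L\otimes C\otimes L)(\Delta\otimes\Delta)$ and $\varepsilon[\ \,]=\varepsilon\otimes\varepsilon$. *)

theory Defs
  imports Main "HOL.Vector_Spaces" "HOL-Library.Function_Algebras"
begin

text \<open>Concrete encoding of the category of Z3-graded F-vector spaces, restricted to
 the tensor powers L^{\<otimes>n} of L = F[x]/(x^3) (basis e_0=1, e_1=x, e_2=x^2, deg e_k = k).
 A basis tensor e_{i1}\<otimes>...\<otimes>e_{in} of L^{\<otimes>n} is indexed by the list [i1,...,in];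
 L^{\<otimes>0} = F (index []).  A linear map L^{\<otimes>n} \<rightarrow> L^{\<otimes>m} is given by its matrix
 M out inp (coefficient of basis tensor out in the image of basis tensor inp).\<close>

type_synonym 'f mor = "nat list \<Rightarrow> nat list \<Rightarrow> 'f"

definition idx :: "nat \<Rightarrow> nat list set" where
  "idx n = {xs. length xs = n \<and> set xs \<subseteq> {0,1,2}}"

definition deg :: "nat list \<Rightarrow> nat" where
  "deg xs = sum_list xs mod 3"

definition r :: "'f::field \<Rightarrow> nat \<Rightarrow> nat \<Rightarrow> 'f" where
  "r q k m = q ^ (k * m)"

definition is_mor :: "nat \<Rightarrow> nat \<Rightarrow> 'f::field mor \<Rightarrow> bool" where
  "is_mor n m M \<longleftrightarrow> (\<forall>out inp. M out inp \<noteq> 0 \<longrightarrow>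
      out \<in> idx m \<and> inp \<in> idx n \<and> deg out = deg inp)"

definition comp :: "nat \<Rightarrow> 'f::field mor \<Rightarrow> 'f mor \<Rightarrow> 'f mor" where
  "comp k M N = (\<lambda>out inp. \<Sum>mid\<in>idx k. M out mid * N mid inp)"

definition tens :: "nat \<Rightarrow> nat \<Rightarrow> 'f::field mor \<Rightarrow> 'f mor \<Rightarrow> 'f mor" where
  "tens m1 n1 M N = (\<lambda>out inp. M (take m1 out) (take n1 inp) * N (drop m1 out) (drop n1 inp))"

definition idm :: "nat \<Rightarrow> 'f::field mor" where
  "idm n = (\<lambda>out inp. if out = inp \<and> inp \<in> idx n then 1 else 0)"

definition madd :: "'f::field mor \<Rightarrow> 'f mor \<Rightarrow> 'f mor" where
  "madd M N = (\<lambda>out inp. M out inp + N out inp)"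

definition mneg :: "'f::field mor \<Rightarrow> 'f mor" where
  "mneg M = (\<lambda>out inp. - M out inp)"

definition mdiff :: "'f::field mor \<Rightarrow> 'f mor \<Rightarrow> 'f mor" where
  "mdiff M N = (\<lambda>out inp. M out inp - N out inp)"

text \<open>braiding C_{L,L}(a \<otimes> b) = r(|b|,|a|) b \<otimes> a, so C(e_i \<otimes> e_j) = r(j,i) e_j \<otimes> e_i\<close>
definition Cbr :: "'f::field \<Rightarrow> 'f mor" where
  "Cbr q = (\<lambda>out inp. if inp \<in> idx 2 \<and> out = rev inp
                        then r q (inp ! 1) (inp ! 0) else 0)"

definition Cinv :: "'f::field \<Rightarrow> 'f mor" where
  "Cinv q = (\<lambda>out inp. if inp \<in> idx 2 \<and> out = rev inp
                        then inverse (r q (inp ! 0) (inp ! 1)) else 0)"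

definition Lmult :: "'f::field mor" where
  "Lmult = (\<lambda>out inp. if inp \<in> idx 2 \<and> out = [inp ! 0 + inp ! 1] \<and> inp ! 0 + inp ! 1 \<le> 2
                        then 1 else 0)"

definition Lbr :: "'f::field \<Rightarrow> 'f mor" where
  "Lbr q = mdiff Lmult (comp 2 Lmult (Cbr q))"

definition BJI :: "'f::field \<Rightarrow> 'f mor \<Rightarrow> bool" where
  "BJI q B \<longleftrightarrow>
    (let J = comp 2 B (tens 1 1 (idm 1) B) in
     madd J (madd (comp 3 (comp 3 J (tens 1 1 (idm 1) (Cinv q))) (tens 2 2 (Cbr q) (idm 1)))
                  (comp 3 (comp 3 J (tens 2 2 (Cinv q) (idm 1))) (tens 1 1 (idm 1) (Cbr q))))
     = (\<lambda>_ _. 0))"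

definition BAS :: "'f::field \<Rightarrow> 'f mor \<Rightarrow> bool" where
  "BAS q B \<longleftrightarrow> B = mneg (comp 2 B (Cbr q))"

definition jacobi_braided_Lie :: "'f::field \<Rightarrow> 'f mor \<Rightarrow> bool" where
  "jacobi_braided_Lie q B \<longleftrightarrow> BJI q B"

definition strict_jacobi_braided_Lie :: "'f::field \<Rightarrow> 'f mor \<Rightarrow> bool" where
  "strict_jacobi_braided_Lie q B \<longleftrightarrow> BJI q B \<and> BAS q B"

definition coalgebra :: "'f::field mor \<Rightarrow> 'f mor \<Rightarrow> bool" where
  "coalgebra D e \<longleftrightarrow> is_mor 1 2 D \<and> is_mor 1 0 e \<and>
     comp 2 (tens 2 1 D (idm 1)) D = comp 2 (tens 1 1 (idm 1) D) D \<and>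
     comp 2 (tens 0 1 e (idm 1)) D = idm 1 \<and>
     comp 2 (tens 1 1 (idm 1) e) D = idm 1"

definition majid_braided_Lie :: "'f::field \<Rightarrow> 'f mor \<Rightarrow> 'f mor \<Rightarrow> 'f mor \<Rightarrow> bool" where
  "majid_braided_Lie q D e B \<longleftrightarrow> coalgebra D e \<and>
     \<comment> \<open>(L1)\<close>
     comp 2 B (tens 1 1 (idm 1) B) =
       comp 2 B (comp 4 (tens 1 2 B B)
         (comp 4 (tens 1 1 (idm 1) (tens 2 2 (Cbr q) (idm 1))) (tens 2 1 D (idm 2)))) \<and>
     \<comment> \<open>(L2)\<close>
     comp 2 (Cbr q) (comp 3 (tens 1 2 B (idm 1)) (comp 3 (tens 1 1 (idm 1) (Cbr q)) (tens 2 1 D (idm 1))))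
       = comp 3 (tens 1 1 (idm 1) B) (tens 2 1 D (idm 1)) \<and>
     \<comment> \<open>(L3)\<close>
     comp 1 D B =
       comp 4 (tens 1 2 B B) (comp 4 (tens 1 1 (idm 1) (tens 2 2 (Cbr q) (idm 1))) (tens 2 1 D D)) \<and>
     comp 1 e B = tens 0 1 e e"

text \<open>Braided m-Lie algebra: there are a Z3-graded associative algebra (A, m) in the category
 (underlying additive group the type 'a, scalar action sc, grading G 0, G 1, G 2) and a
 monomorphism \<phi> : L \<rightarrow> A (given by the images v k of the basis vectors e_k) with
 \<phi>[ ] = m(\<phi>\<otimes>\<phi>) - m(\<phi>\<otimes>\<phi>)C_{L,L}.\<close>
definition braided_mLie :: "'a::ab_group_add itself \<Rightarrow> 'f::field \<Rightarrow> 'f mor \<Rightarrow> bool" where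
  "braided_mLie _ q B \<longleftrightarrow>
    (\<exists>(sc :: 'f \<Rightarrow> 'a \<Rightarrow> 'a) (m :: 'a \<Rightarrow> 'a \<Rightarrow> 'a) (G :: nat \<Rightarrow> 'a set) (v :: nat \<Rightarrow> 'a).
       vector_space sc \<and>
       (\<forall>k<3. module.subspace sc (G k)) \<and>
       (\<forall>a. \<exists>!(a0, a1, a2). a0 \<in> G 0 \<and> a1 \<in> G 1 \<and> a2 \<in> G 2 \<and> a = a0 + a1 + a2) \<and>
       (\<forall>a b c. m (a + b) c = m a c + m b c) \<and>
       (\<forall>a b c. m a (b + c) = m a b + m a c) \<and>
       (\<forall>k a b. m (sc k a) b = sc k (m a b)) \<and>
       (\<forall>k a b. m a (sc k b) = sc k (m a b)) \<and>
       (\<forall>a b c. m (m a b) c = m a (m b c)) \<and>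
       (\<forall>i<3. \<forall>j<3. \<forall>a\<in>G i. \<forall>b\<in>G j. m a b \<in> G ((i + j) mod 3)) \<and>
       (\<forall>k<3. v k \<in> G k) \<and>
       (\<forall>c0 c1 c2. sc c0 (v 0) + sc c1 (v 1) + sc c2 (v 2) = 0 \<longrightarrow> c0 = 0 \<and> c1 = 0 \<and> c2 = 0) \<and>
       (\<forall>i<3. \<forall>j<3. (\<Sum>k<3. sc (B [k] [i, j]) (v k))
            = m (v i) (v j) - sc (r q j i) (m (v j) (v i))))"

end

theory Submission
  imports Defs
begin

text \<open>Since [x^i, x^j] = (1 - q^{ij}) x^{i+j} in F[x]/(x^3), the only nonzero bracket of basis
 vectors is [x, x] = (1 - q) x^2. Its image lies in the span of x^2, which brackets to zero with
 everything, so every double bracket vanishes and (BJI) holds term by term. Braided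
 antisymmetry at x \<otimes> x would say 1 - q = -q (1 - q), i.e. q = -1, and then q^3 = 1 forces
 q = 1. The m-Lie structure comes from L itself, viewed as a graded associative algebra. Finally
 [1, 1] = 0, so (L3) gives \<epsilon>(1)^2 = \<epsilon>([1, 1]) = 0; as \<epsilon> preserves degrees it also
 vanishes on x and x^2, and \<epsilon> = 0 contradicts counitality.\<close>

lemma finite_idx: "finite (idx n)"
proof -
  have "idx n = {xs. set xs \<subseteq> {0, 1, 2::nat} \<and> length xs = n}" by (auto simp: idx_def)
  then show ?thesis using finite_lists_length_eq[of "{0, 1, 2::nat}" n] by simp
qed

lemma idx_2_cases:
  assumes "xs \<in> idx 2"
  obtains a b where "xs = [a, b]" "a \<le> 2" "b \<le> 2"
proof -
  obtain a b where "xs = [a, b]"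
    using assms by (cases xs; cases "tl xs") (auto simp: idx_def)
  with assms that show ?thesis by (auto simp: idx_def)
qed

lemma comp_zero_left: "comp k (\<lambda>_ _. 0) N = (\<lambda>_ _. 0)"
  unfolding comp_def by simp

lemma comp_Cbr:
  "comp 2 M (Cbr q) out inp = (if inp \<in> idx 2 then M out (rev inp) * r q (inp ! 1) (inp ! 0) else 0)"
proof (cases "inp \<in> idx 2")
  case True
  then have "rev inp \<in> idx 2" by (auto simp: idx_def)
  moreover have "comp 2 M (Cbr q) out inp =
      (\<Sum>mid\<in>idx 2. if mid = rev inp then M out (rev inp) * r q (inp ! 1) (inp ! 0) else 0)"
    unfolding comp_def Cbr_def using True by (intro sum.cong) auto
  ultimately show ?thesis using True finite_idx by simp
qed (simp add: comp_def Cbr_def)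

lemma BJI_if_double_bracket_zero:
  assumes "comp 2 B (tens 1 1 (idm 1) B) = (\<lambda>_ _. 0)"
  shows "BJI q B"
  unfolding BJI_def Let_def assms comp_zero_left madd_def by simp

lemma BAS_apply:
  assumes "BAS q B" and "inp \<in> idx 2"
  shows "B out inp = - B out (rev inp) * r q (inp ! 1) (inp ! 0)"
proof -
  have "B out inp = mneg (comp 2 B (Cbr q)) out inp"
    using assms(1) unfolding BAS_def by simp
  with assms(2) show ?thesis by (simp add: mneg_def comp_Cbr)
qed

lemma coalgebra_counit_unit_nonzero:
  assumes "coalgebra D e"
  shows "e [] [0] \<noteq> 0"
proof
  assume e_unit: "e [] [0] = 0"
  have mor: "is_mor 1 0 e" and counit: "comp 2 (tens 0 1 e (idm 1)) D = idm 1"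
    using assms by (auto simp: coalgebra_def)
  have e_zero: "e [] [a] = 0" for a
  proof (cases "a = 0")
    case False
    then have "\<not> ([a] \<in> idx 1 \<and> deg [] = deg [a])" by (auto simp: deg_def idx_def)
    with mor show ?thesis by (auto simp: is_mor_def)
  qed (use e_unit in simp)
  have "comp 2 (tens 0 1 e (idm 1)) D [0] [0] = 0"
    unfolding comp_def tens_def
    by (intro sum.neutral ballI) (auto elim!: idx_2_cases simp: e_zero)
  moreover have "idm 1 [0] [0] = (1 :: 'a)" by (simp add: idm_def idx_def)
  ultimately show False using counit by simp
qed

text \<open>Evaluate \<epsilon>[ ] = \<epsilon> \<otimes> \<epsilon> from (L3) at 1 \<otimes> 1.\<close>

lemma majid_braided_Lie_bracket_unit_nonzero:
  assumes "majid_braided_Lie q D e B"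
  shows "\<exists>k. B [k] [0, 0] \<noteq> 0"
proof (rule ccontr)
  assume "\<not> (\<exists>k. B [k] [0, 0] \<noteq> 0)"
  then have "comp 1 e B [] [0, 0] = 0"
    unfolding comp_def by (intro sum.neutral) (auto simp: idx_def length_Suc_conv)
  moreover have "comp 1 e B = tens 0 1 e e" and "coalgebra D e"
    using assms by (auto simp: majid_braided_Lie_def)
  ultimately have "e [] [0] * e [] [0] = 0" by (simp add: tens_def)
  with coalgebra_counit_unit_nonzero[OF \<open>coalgebra D e\<close>] show False by simp
qed

lemma Lbr_eq: "Lbr q out inp = (if inp = [1, 1] \<and> out = [2] then 1 - q else 0)"
proof (cases "inp \<in> idx 2")
  case True
  then obtain a b where "inp = [a, b]" "a \<le> 2" "b \<le> 2" by (rule idx_2_cases)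
  with True show ?thesis
    by (auto simp: Lbr_def mdiff_def comp_Cbr Lmult_def r_def idx_def)
next
  case False
  moreover have "[1, 1] \<in> idx 2" by (simp add: idx_def)
  ultimately show ?thesis by (auto simp: Lbr_def mdiff_def comp_Cbr Lmult_def)
qed

lemma Lbr_Lbr_zero: "comp 2 (Lbr q) (tens 1 1 (idm 1) (Lbr q)) = (\<lambda>_ _. 0)"
  unfolding comp_def tens_def by (intro ext sum.neutral ballI) (simp add: Lbr_eq)

lemma jacobi_braided_Lie_Lbr: "jacobi_braided_Lie q (Lbr q)"
  unfolding jacobi_braided_Lie_def by (rule BJI_if_double_bracket_zero[OF Lbr_Lbr_zero])

lemma not_BAS_Lbr:
  fixes q :: "'f::field"
  assumes "q ^ 3 = 1" and "q \<noteq> 1"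
  shows "\<not> BAS q (Lbr q)"
proof
  assume "BAS q (Lbr q)"
  then have "Lbr q [2] [1, 1] = - Lbr q [2] [1, 1] * r q 1 1"
    using BAS_apply[of q "Lbr q" "[1, 1]" "[2]"] by (simp add: idx_def)
  then have "(1 - q) * (1 + q) = 0" by (simp add: Lbr_eq r_def algebra_simps)
  with assms(2) have "q = -1" by (simp add: add_eq_0_iff)
  with assms show False by simp
qed

lemma no_majid_braided_Lie_Lbr: "\<not> majid_braided_Lie q D e (Lbr q)"
  using majid_braided_Lie_bracket_unit_nonzero by (fastforce simp: Lbr_eq)

text \<open>The algebra A is F[x]/(x^3) acting on coefficient sequences: trunc_mult reads only the
 coefficients of 1, x, x^2 and produces no others, so it is associative on all of nat \<Rightarrow> F.\<close>

definition fscale :: "'f::field \<Rightarrow> (nat \<Rightarrow> 'f) \<Rightarrow> nat \<Rightarrow> 'f" where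
  "fscale c a = (\<lambda>n. c * a n)"

definition trunc_mult :: "(nat \<Rightarrow> 'f::field) \<Rightarrow> (nat \<Rightarrow> 'f) \<Rightarrow> nat \<Rightarrow> 'f" where
  "trunc_mult a b = (\<lambda>n. if n \<le> 2 then \<Sum>k\<le>n. a k * b (n - k) else 0)"

definition deg_part :: "nat \<Rightarrow> (nat \<Rightarrow> 'f::field) set" where
  "deg_part k = {a. \<forall>n. n mod 3 \<noteq> k \<longrightarrow> a n = 0}"

definition deg_comp :: "nat \<Rightarrow> (nat \<Rightarrow> 'f::field) \<Rightarrow> nat \<Rightarrow> 'f" where
  "deg_comp k a = (\<lambda>n. if n mod 3 = k then a n else 0)"

definition unit_seq :: "nat \<Rightarrow> nat \<Rightarrow> 'f::field" where
  "unit_seq k = (\<lambda>n. if n = k then 1 else 0)"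

lemma trunc_mult_cases:
  "trunc_mult a b n =
     (if n = 0 then a 0 * b 0 else if n = 1 then a 0 * b 1 + a 1 * b 0
      else if n = 2 then a 0 * b 2 + a 1 * b 1 + a 2 * b 0 else 0)"
proof -
  have "n = 0 \<or> n = 1 \<or> n = 2 \<or> 2 < n" by arith
  then show ?thesis
    by (elim disjE) (simp_all add: trunc_mult_def numeral_2_eq_2 atMost_Suc)
qed

lemma module_fscale: "module (fscale :: 'f::field \<Rightarrow> _)"
  by unfold_locales (auto simp: fscale_def algebra_simps)

lemma vector_space_fscale: "vector_space (fscale :: 'f::field \<Rightarrow> _)"
  using module_fscale unfolding vector_space_def module_def .

lemma subspace_deg_part: "module.subspace (fscale :: 'f::field \<Rightarrow> _) (deg_part k)"
  by (auto simp: module.subspace_def[OF module_fscale] deg_part_def fscale_def)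

lemma deg_part_decomposition:
  "\<exists>!(a0, a1, a2). a0 \<in> deg_part 0 \<and> a1 \<in> deg_part 1 \<and> a2 \<in> deg_part 2 \<and>
     (a :: nat \<Rightarrow> 'f::field) = a0 + a1 + a2"
proof (rule ex1I[of _ "(deg_comp 0 a, deg_comp 1 a, deg_comp 2 a)"])
  fix t
  assume "case t of (a0, a1, a2) \<Rightarrow>
    a0 \<in> deg_part 0 \<and> a1 \<in> deg_part 1 \<and> a2 \<in> deg_part 2 \<and> a = a0 + a1 + a2"
  then obtain a0 a1 a2 where t: "t = (a0, a1, a2)"
    and parts: "a0 \<in> deg_part 0" "a1 \<in> deg_part 1" "a2 \<in> deg_part 2" "a = a0 + a1 + a2"
    by (cases t) auto
  have "n mod 3 = 0 \<or> n mod 3 = 1 \<or> n mod 3 = 2" for n :: nat by arith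
  with parts have "a0 = deg_comp 0 a" "a1 = deg_comp 1 a" "a2 = deg_comp 2 a"
    by (auto simp: fun_eq_iff deg_part_def deg_comp_def)
  with t show "t = (deg_comp 0 a, deg_comp 1 a, deg_comp 2 a)" by simp
qed (auto simp: deg_part_def deg_comp_def fun_eq_iff)

lemma trunc_mult_deg_part:
  assumes "i < 3" "j < 3" "a \<in> deg_part i" "b \<in> deg_part j"
  shows "trunc_mult a b \<in> deg_part ((i + j) mod 3)"
proof -
  have a: "n mod 3 \<noteq> i \<Longrightarrow> a n = 0" and b: "n mod 3 \<noteq> j \<Longrightarrow> b n = 0" for n
    using assms by (auto simp: deg_part_def)
  have "i = 0 \<or> i = 1 \<or> i = 2" "j = 0 \<or> j = 1 \<or> j = 2" using assms by auto
  then show ?thesis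
    using a[of 0] a[of 1] a[of 2] b[of 0] b[of 1] b[of 2]
    by (auto simp: deg_part_def trunc_mult_cases)
qed

lemma trunc_mult_unit_seq:
  "trunc_mult (unit_seq i) (unit_seq j) = (if i + j \<le> 2 then unit_seq (i + j) else 0)"
  by (auto simp: fun_eq_iff trunc_mult_cases unit_seq_def)

lemma Lbr_unit_seq:
  assumes "i < 3" "j < 3"
  shows "(\<Sum>k<3. fscale (Lbr q [k] [i, j]) (unit_seq k)) =
    trunc_mult (unit_seq i) (unit_seq j) - fscale (r q j i) (trunc_mult (unit_seq j) (unit_seq i))"
proof -
  have "i = 0 \<or> i = 1 \<or> i = 2" "j = 0 \<or> j = 1 \<or> j = 2" using assms by auto
  then show ?thesis
    unfolding trunc_mult_unit_seq
    by (auto simp: Lbr_eq fscale_def unit_seq_def r_def fun_eq_iff numeral_3_eq_3 lessThan_Suc)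
qed

lemma braided_mLie_Lbr: "braided_mLie TYPE(nat \<Rightarrow> 'f) q (Lbr (q :: 'f::field))"
  unfolding braided_mLie_def
proof (intro exI[of _ "fscale :: 'f \<Rightarrow> _"] exI[of _ trunc_mult] exI[of _ deg_part]
    exI[of _ unit_seq] conjI allI impI ballI)
  fix a b c :: "nat \<Rightarrow> 'f" and k :: 'f
  show "trunc_mult (a + b) c = trunc_mult a c + trunc_mult b c"
    and "trunc_mult a (b + c) = trunc_mult a b + trunc_mult a c"
    and "trunc_mult (fscale k a) b = fscale k (trunc_mult a b)"
    and "trunc_mult a (fscale k b) = fscale k (trunc_mult a b)"
    and "trunc_mult (trunc_mult a b) c = trunc_mult a (trunc_mult b c)"
    by (auto simp: fun_eq_iff trunc_mult_cases fscale_def algebra_simps)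
next
  fix a :: "nat \<Rightarrow> 'f"
  show "\<exists>!(a0, a1, a2). a0 \<in> deg_part 0 \<and> a1 \<in> deg_part 1 \<and> a2 \<in> deg_part 2 \<and> a = a0 + a1 + a2"
    by (rule deg_part_decomposition)
next
  fix k :: nat
  assume "k < 3"
  then show "unit_seq k \<in> (deg_part k :: (nat \<Rightarrow> 'f) set)"
    by (auto simp: unit_seq_def deg_part_def)
next
  fix c0 c1 c2 :: 'f
  assume indep: "fscale c0 (unit_seq 0) + fscale c1 (unit_seq 1) + fscale c2 (unit_seq 2) = 0"
  show "c0 = 0" "c1 = 0" "c2 = 0"
    using fun_cong[OF indep, of 0] fun_cong[OF indep, of 1] fun_cong[OF indep, of 2]
    by (simp_all add: fscale_def unit_seq_def)
qed (simp_all add: vector_space_fscale subspace_deg_part trunc_mult_deg_part Lbr_unit_seq)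

theorem mainTheorem5:
  fixes q :: "'f::field"
  assumes "q ^ 3 = 1" and "q \<noteq> 1"
  shows "braided_mLie TYPE(nat \<Rightarrow> 'f) q (Lbr q)
         \<and> jacobi_braided_Lie q (Lbr q)
         \<and> \<not> strict_jacobi_braided_Lie q (Lbr q)
         \<and> \<not> (\<exists>D e. majid_braided_Lie q D e (Lbr q))"
  unfolding strict_jacobi_braided_Lie_def
  using braided_mLie_Lbr jacobi_braided_Lie_Lbr not_BAS_Lbr[OF assms] no_majid_braided_Lie_Lbr
  by blast

end
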